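(* Let $(T_0,\widetilde T_0)$ be a joint pair of closed abstract Friedrichs operators on a complex Hilbert space $\mathcal{H}$, and let $T_1:=\widetilde T_0^*$, $\widetilde T_1:=T_0^*$, $\mathcal{W}_0:=\operatorname{dom}T_0=\operatorname{dom}\widetilde T_0$ and $\mathcal{W}:=\operatorname{dom}T_1=\operatorname{dom}\widetilde T_1$. Then $$\mathcal{W}=\mathcal{W}_0\dotplus\operatorname{ker}T_1\dotplus\operatorname{ker}\widetilde T_1,$$ i.e. every $u\in\mathcal{W}$ can be written uniquely as $u=u_0+\nu+\tilde\nu$ with $u_0\in\mathcal{W}_0$, $\nu\in\operatorname{ker}T_1$, $\tilde\nu\in\operatorname{ker}\widetilde T_1$.
   Context: $\mathcal{H}$ is a complex Hilbert space with inner product $\langle\cdot,\cdot\rangle$ (linear in the first argument) and norm $\|\cdot\|$. A pair $(T,\widetilde T)$ of densely defined linear operators on $\mathcal{H}$ is a joint pair of abstract Friedrichs operators if: (T1) $T$ and $\widetilde T$ have a common dense domain $\mathcal{D}$ and $\langle T\varphi,\psi\rangle=\langle\varphi,\widetilde T\psi\rangle$ for all $\varphi,\psi\in\mathcal{D}$; (T2) there is $c>0$ with $\|(T+\widetilde T)\varphi\|\le c\|\varphi\|$ for all $\varphi\in\mathcal{D}$; (T3) there is $\mu_0>0$ with $\langle (T+\widetilde T)\varphi,\varphi\rangle\ge 2\mu_0\|\varphi\|^2$ for all $\varphi\in\mathcal{D}$. A joint pair of closed abstract Friedrichs operators is such a pair $(T_0,\widetilde T_0)$ in which both operators are closed. For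 such a pair one has $T_0\subseteq T_1$, $\widetilde T_0\subseteq\widetilde T_1$ and $\operatorname{dom}T_1=\operatorname{dom}\widetilde T_1$. *)

theory Defs
  imports "HOL-Analysis.Analysis"
begin

text \<open>A complex Hilbert space is modelled as a real Banach space (type class banach)
 together with a complex scalar multiplication sm extending the real one, and an
 inner product ip (linear in the first argument, conjugate symmetric) whose
 associated norm is the norm of the space.\<close>

definition complex_hilbert ::
  "(complex \<Rightarrow> 'a::banach \<Rightarrow> 'a) \<Rightarrow> ('a \<Rightarrow> 'a \<Rightarrow> complex) \<Rightarrow> bool" where
  "complex_hilbert sm ip \<longleftrightarrow>
     (\<forall>r x. sm (complex_of_real r) x = r *\<^sub>R x) \<and>
     (\<forall>a b x. sm (a + b) x = sm a x + sm b x) \<and>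
     (\<forall>a x y. sm a (x + y) = sm a x + sm a y) \<and>
     (\<forall>a b x. sm (a * b) x = sm a (sm b x)) \<and>
     (\<forall>x y z. ip (x + y) z = ip x z + ip y z) \<and>
     (\<forall>a x y. ip (sm a x) y = a * ip x y) \<and>
     (\<forall>x y. ip y x = cnj (ip x y)) \<and>
     (\<forall>x. ip x x = complex_of_real ((norm x)\<^sup>2))"

text \<open>A (partially defined) operator is given by its domain D and a function T
 (whose values outside D are irrelevant).  Linear: D is a complex subspace and T is
 complex linear on D.\<close>

definition lin_op :: "(complex \<Rightarrow> 'a::banach \<Rightarrow> 'a) \<Rightarrow> 'a set \<Rightarrow> ('a \<Rightarrow> 'a) \<Rightarrow> bool" where
  "lin_op sm D T \<longleftrightarrow> 0 \<in> D \<and>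
     (\<forall>x\<in>D. \<forall>y\<in>D. x + y \<in> D \<and> T (x + y) = T x + T y) \<and>
     (\<forall>a. \<forall>x\<in>D. sm a x \<in> D \<and> T (sm a x) = sm a (T x))"

definition densely_defined :: "'a::banach set \<Rightarrow> bool" where
  "densely_defined D \<longleftrightarrow> closure D = UNIV"

definition closed_op :: "'a::banach set \<Rightarrow> ('a \<Rightarrow> 'a) \<Rightarrow> bool" where
  "closed_op D T \<longleftrightarrow> closed {(x, T x) | x. x \<in> D}"

definition adj_dom :: "('a \<Rightarrow> 'a \<Rightarrow> complex) \<Rightarrow> 'a set \<Rightarrow> ('a \<Rightarrow> 'a) \<Rightarrow> 'a set" where
  "adj_dom ip D T = {v. \<exists>w. \<forall>u\<in>D. ip (T u) v = ip u w}"

definition adj :: "('a \<Rightarrow> 'a \<Rightarrow> complex) \<Rightarrow> 'a set \<Rightarrow> ('a \<Rightarrow> 'a) \<Rightarrow> 'a \<Rightarrow> 'a" where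
  "adj ip D T v = (THE w. \<forall>u\<in>D. ip (T u) v = ip u w)"

definition friedrichs_pair ::
  "(complex \<Rightarrow> 'a::banach \<Rightarrow> 'a) \<Rightarrow> ('a \<Rightarrow> 'a \<Rightarrow> complex) \<Rightarrow> 'a set \<Rightarrow> ('a \<Rightarrow> 'a) \<Rightarrow> ('a \<Rightarrow> 'a) \<Rightarrow> bool" where
  "friedrichs_pair sm ip D T Tt \<longleftrightarrow>
     lin_op sm D T \<and> lin_op sm D Tt \<and> densely_defined D \<and>
     (\<forall>\<phi>\<in>D. \<forall>\<psi>\<in>D. ip (T \<phi>) \<psi> = ip \<phi> (Tt \<psi>)) \<and>
     (\<exists>c>0. \<forall>\<phi>\<in>D. norm (T \<phi> + Tt \<phi>) \<le> c * norm \<phi>) \<and>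
     (\<exists>\<mu>0>0. \<forall>\<phi>\<in>D. Re (ip (T \<phi> + Tt \<phi>) \<phi>) \<ge> 2 * \<mu>0 * (norm \<phi>)\<^sup>2)"

definition closed_friedrichs_pair ::
  "(complex \<Rightarrow> 'a::banach \<Rightarrow> 'a) \<Rightarrow> ('a \<Rightarrow> 'a \<Rightarrow> complex) \<Rightarrow> 'a set \<Rightarrow> ('a \<Rightarrow> 'a) \<Rightarrow> ('a \<Rightarrow> 'a) \<Rightarrow> bool" where
  "closed_friedrichs_pair sm ip D T Tt \<longleftrightarrow>
     friedrichs_pair sm ip D T Tt \<and> closed_op D T \<and> closed_op D Tt"

end

theory Submission
  imports Defs
begin

(* Condition (T3) makes T0 bounded below; being closed, T0 therefore has closed range, whose
   orthogonal complement is ker Tt1, so H = ran T0 (+) ker Tt1.  The kernel of Tt1 lies in W,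
   and there T1 is the adjoint of the bounded extension of T0 + Tt0, hence bounded and coercive.
   Given u in W, the Lax-Milgram lemma for the compression of T1 to ker Tt1 yields nt in ker Tt1
   with T1 (u - nt) orthogonal to ker Tt1, i.e. T1 (u - nt) = T0 u0 for some u0 in W0, and then
   n = u - u0 - nt lies in ker T1.  For uniqueness, if u0 + n + nt = 0 then applying T1 gives
   T0 u0 + T1 nt = 0; pairing with nt, which is orthogonal to ran T0, and coercivity force nt = 0,
   after which T0 u0 = 0 forces u0 = 0. *)

lemma closed_snd_image_if_bounded_below:
  fixes S :: "('a::banach \<times> 'b::real_normed_vector) set"
  assumes "closed S" and "\<mu> > 0"
    and below: "\<And>x y x' y'. (x, y) \<in> S \<Longrightarrow> (x', y') \<in> S \<Longrightarrow> \<mu> * norm (x - x') \<le> norm (y - y')"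
  shows "closed (snd ` S)"
  unfolding closed_sequential_limits
proof (intro allI impI)
  fix y l assume "(\<forall>n. y n \<in> snd ` S) \<and> y \<longlonglongrightarrow> l"
  then have y: "\<And>n. y n \<in> snd ` S" and lim: "y \<longlonglongrightarrow> l" by auto
  have "\<forall>n. \<exists>x. (x, y n) \<in> S" using y by force
  then obtain x where xy: "\<And>n. (x n, y n) \<in> S" by metis
  have "Cauchy x"
  proof (rule metric_CauchyI)
    fix e :: real assume "e > 0"
    then obtain N where N: "\<forall>m\<ge>N. \<forall>n\<ge>N. dist (y m) (y n) < \<mu> * e"
      using metric_CauchyD[OF LIMSEQ_imp_Cauchy[OF lim], of "\<mu> * e"] \<open>\<mu> > 0\<close> by auto
    have "dist (x m) (x n) < e" if "N \<le> m" "N \<le> n" for m n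
    proof -
      have "\<mu> * dist (x m) (x n) < \<mu> * e"
        using below[OF xy xy, of m n] N that by (fastforce simp: dist_norm)
      then show ?thesis using \<open>\<mu> > 0\<close> by simp
    qed
    then show "\<exists>N. \<forall>m\<ge>N. \<forall>n\<ge>N. dist (x m) (x n) < e" by blast
  qed
  then obtain z where "x \<longlonglongrightarrow> z" using Cauchy_convergent_iff convergent_def by blast
  then have "(\<lambda>n. (x n, y n)) \<longlonglongrightarrow> (z, l)" using lim by (rule tendsto_Pair)
  then have "(z, l) \<in> S" by (rule closed_sequentially[OF \<open>closed S\<close> xy])
  then show "l \<in> snd ` S" by force
qed

lemma quadratic_nonneg_imp_linear_coeff_zero:
  fixes r s :: real
  assumes "s \<ge> 0" and nonneg: "\<And>t. 0 \<le> t\<^sup>2 * s - 2 * t * r"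
  shows "r = 0"
proof -
  define t where "t = r / (s + 1)"
  have "(s + 1)\<^sup>2 * (t\<^sup>2 * s - 2 * t * r) = - (r\<^sup>2 * (s + 2))"
  proof -
    have r: "r = t * (s + 1)" using \<open>s \<ge> 0\<close> by (simp add: t_def)
    show ?thesis unfolding r by (simp add: power2_eq_square algebra_simps)
  qed
  moreover have "0 \<le> (s + 1)\<^sup>2 * (t\<^sup>2 * s - 2 * t * r)" using nonneg[of t] by simp
  moreover have "0 \<le> r\<^sup>2 * (s + 2)" using \<open>s \<ge> 0\<close> by simp
  ultimately have "r\<^sup>2 * (s + 2) = 0" by linarith
  moreover have "s + 2 \<noteq> 0" using \<open>s \<ge> 0\<close> by linarith
  ultimately have "r\<^sup>2 = 0" by (metis mult_eq_0_iff)
  then show ?thesis by simp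
qed

lemma mult_square_le_imp_le:
  fixes a b c :: real
  assumes "a * c\<^sup>2 \<le> b * c" and "0 \<le> b" and "0 \<le> c"
  shows "a * c \<le> b"
proof (cases "c = 0")
  case False
  then have "0 < c" using \<open>0 \<le> c\<close> by simp
  have "(a * c) * c \<le> b * c" using assms(1) by (simp only: power2_eq_square mult.assoc)
  then show ?thesis using \<open>0 < c\<close> by (rule mult_right_le_imp_le)
qed (simp add: \<open>0 \<le> b\<close>)

section \<open>Complex Hilbert spaces\<close>

locale complex_hilbert_space =
  fixes sm :: "complex \<Rightarrow> 'a::banach \<Rightarrow> 'a" and ip :: "'a \<Rightarrow> 'a \<Rightarrow> complex"
  assumes complex_hilbert: "complex_hilbert sm ip"
begin

lemma sm_of_real: "sm (complex_of_real r) x = r *\<^sub>R x"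
  and sm_add_right: "sm a (x + y) = sm a x + sm a y"
  and sm_mult: "sm (a * b) x = sm a (sm b x)"
  and ip_add_left: "ip (x + y) z = ip x z + ip y z"
  and ip_sm_left: "ip (sm a x) y = a * ip x y"
  and ip_commute: "ip y x = cnj (ip x y)"
  and ip_self: "ip x x = complex_of_real ((norm x)\<^sup>2)"
  using complex_hilbert unfolding complex_hilbert_def by blast+

lemma sm_zero_right [simp]: "sm a 0 = 0"
  using sm_add_right[of a 0 0] by simp

lemma sm_minus_one: "sm (-1) x = - x"
  using sm_of_real[of "-1" x] by simp

lemma sm_scaleR: "sm a (r *\<^sub>R x) = r *\<^sub>R sm a x"
proof -
  have "sm a (sm (complex_of_real r) x) = sm (complex_of_real r) (sm a x)"
    by (simp only: sm_mult[symmetric] mult.commute)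
  then show ?thesis by (simp only: sm_of_real)
qed

lemma sm_diff_right: "sm a (x - y) = sm a x - sm a y"
  using sm_add_right[of a "x - y" y] by (simp add: eq_diff_eq)

lemma ip_add_right: "ip x (y + z) = ip x y + ip x z"
  by (subst (1 2 3) ip_commute) (simp add: ip_add_left)

lemma ip_sm_right: "ip x (sm a y) = cnj a * ip x y"
  by (subst (1 2) ip_commute) (simp add: ip_sm_left)

lemma ip_zero_left [simp]: "ip 0 y = 0"
  using ip_add_left[of 0 0 y] by simp

lemma ip_zero_right [simp]: "ip x 0 = 0"
  using ip_add_right[of x 0 0] by simp

lemma ip_eq_0_commute: "ip x y = 0 \<longleftrightarrow> ip y x = 0"
  by (subst ip_commute) simp

lemma Re_ip_commute: "Re (ip y x) = Re (ip x y)"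
  by (subst ip_commute) simp

lemma ip_minus_left: "ip (- x) y = - ip x y"
  using ip_sm_left[of "-1" x y] by (simp add: sm_minus_one)

lemma ip_minus_right: "ip x (- y) = - ip x y"
  using ip_sm_right[of x "-1" y] by (simp add: sm_minus_one)

lemma ip_diff_left: "ip (x - y) z = ip x z - ip y z"
  using ip_add_left[of x "- y" z] by (simp add: ip_minus_left)

lemma ip_diff_right: "ip x (y - z) = ip x y - ip x z"
  using ip_add_right[of x y "- z"] by (simp add: ip_minus_right)

lemma ip_scaleR_left: "ip (r *\<^sub>R x) y = r * ip x y"
  by (simp only: sm_of_real[symmetric] ip_sm_left)

lemma ip_scaleR_right: "ip x (r *\<^sub>R y) = r * ip x y"
  by (simp only: sm_of_real[symmetric] ip_sm_right complex_cnj_complex_of_real)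

lemma Re_ip_self: "Re (ip x x) = (norm x)\<^sup>2"
  by (simp add: ip_self)

lemma ip_self_eq_0: "ip x x = 0 \<longleftrightarrow> x = 0"
  by (simp add: ip_self)

lemma norm_add_square: "(norm (x + y))\<^sup>2 = (norm x)\<^sup>2 + 2 * Re (ip x y) + (norm y)\<^sup>2"
proof -
  have "Re (ip (x + y) (x + y)) = Re (ip x x) + Re (ip x y) + Re (ip y x) + Re (ip y y)"
    by (simp add: ip_add_left ip_add_right)
  then show ?thesis by (simp add: Re_ip_self Re_ip_commute)
qed

lemma norm_diff_square: "(norm (x - y))\<^sup>2 = (norm x)\<^sup>2 - 2 * Re (ip x y) + (norm y)\<^sup>2"
  using norm_add_square[of x "- y"] by (simp add: ip_minus_right)

lemma parallelogram_law: "(norm ((x::'a) + y))\<^sup>2 + (norm (x - y))\<^sup>2 = 2 * (norm x)\<^sup>2 + 2 * (norm y)\<^sup>2"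
  using norm_add_square[of x y] norm_diff_square[of x y] by simp

lemma Re_ip_le: "Re (ip x y) \<le> norm x * norm y"
proof -
  have "(norm (x + y))\<^sup>2 \<le> (norm x + norm y)\<^sup>2"
    by (simp add: power_mono norm_triangle_ineq)
  then show ?thesis using norm_add_square[of x y] by (simp add: power2_sum)
qed

lemma norm_sm: "norm (sm a x) = cmod a * norm x"
proof -
  have "complex_of_real ((norm (sm a x))\<^sup>2) = (a * cnj a) * complex_of_real ((norm x)\<^sup>2)"
    by (simp only: ip_self[symmetric] ip_sm_left ip_sm_right mult.assoc mult.left_commute)
  also have "a * cnj a = complex_of_real ((cmod a)\<^sup>2)" by (rule complex_norm_square[symmetric])
  finally have "(norm (sm a x))\<^sup>2 = (cmod a * norm x)\<^sup>2"
    by (simp only: of_real_mult[symmetric] of_real_eq_iff power_mult_distrib)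
  then show ?thesis by (simp add: power2_eq_iff_nonneg)
qed

lemma cmod_ip_le: "cmod (ip x y) \<le> norm x * norm y"
proof (cases "ip x y = 0")
  case False
  \<comment> \<open>rotate x by a unimodular scalar making the inner product real and nonnegative\<close>
  define a where "a = cnj (ip x y) / cmod (ip x y)"
  have "a * ip x y = (ip x y * cnj (ip x y)) / complex_of_real (cmod (ip x y))"
    by (simp add: a_def mult.commute)
  also have "\<dots> = complex_of_real ((cmod (ip x y))\<^sup>2) / complex_of_real (cmod (ip x y))"
    by (simp only: complex_norm_square)
  also have "\<dots> = complex_of_real (cmod (ip x y))"
    using False by (simp add: power2_eq_square)
  finally have "a * ip x y = complex_of_real (cmod (ip x y))" .
  then have "cmod (ip x y) = Re (ip (sm a x) y)" by (simp add: ip_sm_left)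
  also have "\<dots> \<le> norm (sm a x) * norm y" by (rule Re_ip_le)
  finally show ?thesis using False by (simp add: norm_sm a_def norm_divide)
qed simp

lemma bounded_linear_sm: "bounded_linear (sm a)"
proof
  show "\<exists>K. \<forall>x. norm (sm a x) \<le> norm x * K"
    by (rule exI[of _ "cmod a"]) (simp add: norm_sm)
qed (rule sm_add_right, rule sm_scaleR)

lemma bounded_bilinear_ip: "bounded_bilinear ip"
proof
  show "\<exists>K. \<forall>x y. norm (ip x y) \<le> norm x * norm y * K"
    by (rule exI[of _ 1]) (simp add: cmod_ip_le)
qed (simp_all only: ip_add_left ip_add_right ip_scaleR_left ip_scaleR_right scaleR_conv_of_real)

lemmas tendsto_ip [tendsto_intros] = bounded_bilinear.tendsto[OF bounded_bilinear_ip]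
lemmas continuous_on_ip [continuous_intros] = bounded_bilinear.continuous_on[OF bounded_bilinear_ip]
lemmas continuous_on_sm [continuous_intros] = bounded_linear.continuous_on[OF bounded_linear_sm]

definition csubspace :: "'a set \<Rightarrow> bool" where
  "csubspace M \<longleftrightarrow> 0 \<in> M \<and> (\<forall>x\<in>M. \<forall>y\<in>M. x + y \<in> M) \<and> (\<forall>a. \<forall>x\<in>M. sm a x \<in> M)"

lemma csubspace_0: "csubspace M \<Longrightarrow> 0 \<in> M"
  and csubspace_add: "csubspace M \<Longrightarrow> x \<in> M \<Longrightarrow> y \<in> M \<Longrightarrow> x + y \<in> M"
  and csubspace_sm: "csubspace M \<Longrightarrow> x \<in> M \<Longrightarrow> sm a x \<in> M"
  unfolding csubspace_def by blast+

lemma csubspace_diff: "csubspace M \<Longrightarrow> x \<in> M \<Longrightarrow> y \<in> M \<Longrightarrow> x - y \<in> M"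
  using csubspace_add[of M x "sm (-1) y"] csubspace_sm[of M y "-1"] by (simp add: sm_minus_one)

lemma csubspace_scaleR: "csubspace M \<Longrightarrow> x \<in> M \<Longrightarrow> r *\<^sub>R x \<in> M"
  using csubspace_sm[of M x "complex_of_real r"] by (simp add: sm_of_real)

lemma lin_op_csubspace: "lin_op sm D T \<Longrightarrow> csubspace D"
  unfolding lin_op_def csubspace_def by blast

lemma lin_op_add: "lin_op sm D T \<Longrightarrow> x \<in> D \<Longrightarrow> y \<in> D \<Longrightarrow> T (x + y) = T x + T y"
  and lin_op_sm: "lin_op sm D T \<Longrightarrow> x \<in> D \<Longrightarrow> T (sm a x) = sm a (T x)"
  unfolding lin_op_def by blast+

lemma lin_op_zero: "lin_op sm D T \<Longrightarrow> T 0 = 0"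
  using lin_op_add[of D T 0 0] csubspace_0[OF lin_op_csubspace] by simp

lemma lin_op_diff: "lin_op sm D T \<Longrightarrow> x \<in> D \<Longrightarrow> y \<in> D \<Longrightarrow> T (x - y) = T x - T y"
  using lin_op_add[of D T "x - y" y] csubspace_diff[OF lin_op_csubspace] by (simp add: eq_diff_eq)

lemma lin_op_restrict: "lin_op sm D T \<Longrightarrow> csubspace K \<Longrightarrow> K \<subseteq> D \<Longrightarrow> lin_op sm K T"
  unfolding lin_op_def csubspace_def by blast

lemma csubspace_kernel: "lin_op sm D T \<Longrightarrow> csubspace {x \<in> D. T x = 0}"
  using lin_op_zero unfolding lin_op_def csubspace_def by auto

lemma csubspace_image:
  assumes T: "lin_op sm D T"
  shows "csubspace (T ` D)"
  unfolding csubspace_def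
proof (intro conjI ballI allI)
  show "0 \<in> T ` D" using lin_op_zero[OF T] csubspace_0[OF lin_op_csubspace[OF T]] by force
next
  fix x y assume "x \<in> T ` D" "y \<in> T ` D"
  then obtain x' y' where "x' \<in> D" "y' \<in> D" "x = T x'" "y = T y'" by blast
  then show "x + y \<in> T ` D"
    using lin_op_add[OF T] csubspace_add[OF lin_op_csubspace[OF T]] by (metis image_eqI)
next
  fix a x assume "x \<in> T ` D"
  then obtain x' where "x' \<in> D" "x = T x'" by blast
  then show "sm a x \<in> T ` D"
    using lin_op_sm[OF T] csubspace_sm[OF lin_op_csubspace[OF T]] by (metis image_eqI)
qed

lemma lin_op_bounded_tendsto:
  assumes A: "lin_op sm K A" and bounded: "\<And>v. v \<in> K \<Longrightarrow> norm (A v) \<le> C * norm v"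
    and f: "\<And>n. f n \<in> K" "v \<in> K" "f \<longlonglongrightarrow> v"
  shows "(\<lambda>n. A (f n)) \<longlonglongrightarrow> A v"
proof -
  have "(\<lambda>n. A (f n) - A v) \<longlonglongrightarrow> 0"
  proof (rule Lim_null_comparison)
    show "\<forall>\<^sub>F n in sequentially. norm (A (f n) - A v) \<le> C * norm (f n - v)"
      using f(1,2) bounded csubspace_diff[OF lin_op_csubspace[OF A]]
      by (intro always_eventually allI) (simp add: lin_op_diff[OF A, symmetric])
    have "(\<lambda>n. C * norm (f n - v)) \<longlonglongrightarrow> C * norm (v - v)" by (intro tendsto_intros f(3))
    then show "(\<lambda>n. C * norm (f n - v)) \<longlonglongrightarrow> 0" by simp
  qed
  then show ?thesis by (simp add: LIM_zero_iff)
qed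

subsection \<open>Orthogonal projection and the Riesz representation\<close>

lemma midpoint_dist_bound:
  fixes x a b :: 'a
  assumes "d \<le> (norm (x - (1/2) *\<^sub>R (a + b)))\<^sup>2"
  shows "(norm (a - b))\<^sup>2 \<le> 2 * ((norm (x - a))\<^sup>2 - d) + 2 * ((norm (x - b))\<^sup>2 - d)"
proof -
  have "(x - a) + (x - b) = 2 *\<^sub>R (x - (1/2) *\<^sub>R (a + b))" by (simp add: algebra_simps scaleR_2)
  then have "(norm ((x - a) + (x - b)))\<^sup>2 = 4 * (norm (x - (1/2) *\<^sub>R (a + b)))\<^sup>2"
    by (simp add: power_mult_distrib)
  moreover have "(x - a) - (x - b) = b - a" by simp
  ultimately show ?thesis
    using assms parallelogram_law[of "x - a" "x - b"] by (simp add: norm_minus_commute)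
qed

lemma nearest_point_exists:
  assumes "closed M" and M: "csubspace M"
  obtains p where "p \<in> M" and "\<And>m. m \<in> M \<Longrightarrow> norm (x - p) \<le> norm (x - m)"
proof -
  define d where "d = (INF m\<in>M. (norm (x - m))\<^sup>2)"
  have bdd: "bdd_below ((\<lambda>m. (norm (x - m))\<^sup>2) ` M)" by (rule bdd_belowI2[of _ 0]) simp
  have d_le: "d \<le> (norm (x - m))\<^sup>2" if "m \<in> M" for m
    unfolding d_def using bdd that by (rule cINF_lower)
  have "\<exists>m\<in>M. (norm (x - m))\<^sup>2 < d + inverse (real (Suc n))" for n
  proof -
    have "M \<noteq> {}" using csubspace_0[OF M] by blast
    moreover have "d < d + inverse (real (Suc n))" by simp
    ultimately show ?thesis unfolding d_def using cINF_less_iff[OF _ bdd] by blast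
  qed
  then obtain ms where ms: "\<And>n. ms n \<in> M" "\<And>n. (norm (x - ms n))\<^sup>2 < d + inverse (real (Suc n))"
    by metis
  have gap: "(norm (ms m - ms n))\<^sup>2 \<le> 2 * inverse (real (Suc m)) + 2 * inverse (real (Suc n))" for m n
  proof -
    have "(1/2) *\<^sub>R (ms m + ms n) \<in> M" using ms(1) by (simp add: M csubspace_add csubspace_scaleR)
    then have "(norm (ms m - ms n))\<^sup>2 \<le> 2 * ((norm (x - ms m))\<^sup>2 - d) + 2 * ((norm (x - ms n))\<^sup>2 - d)"
      by (rule midpoint_dist_bound[OF d_le])
    then show ?thesis using ms(2)[of m] ms(2)[of n] by argo
  qed
  have "Cauchy ms"
  proof (rule metric_CauchyI)
    fix e :: real assume "e > 0"
    then obtain N where N: "inverse (real (Suc N)) < e\<^sup>2 / 4"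
      using reals_Archimedean[of "e\<^sup>2 / 4"] by auto
    have "dist (ms m) (ms n) < e" if "N \<le> m" "N \<le> n" for m n
    proof -
      have "inverse (real (Suc m)) \<le> inverse (real (Suc N))" "inverse (real (Suc n)) \<le> inverse (real (Suc N))"
        using that by (auto intro!: le_imp_inverse_le)
      then have "(norm (ms m - ms n))\<^sup>2 < e\<^sup>2" using gap[of m n] N by argo
      then show ?thesis using \<open>e > 0\<close> by (simp add: dist_norm power_less_imp_less_base)
    qed
    then show "\<exists>N. \<forall>m\<ge>N. \<forall>n\<ge>N. dist (ms m) (ms n) < e" by blast
  qed
  then obtain p where p: "ms \<longlonglongrightarrow> p" using Cauchy_convergent_iff convergent_def by blast
  have p_min: "(norm (x - p))\<^sup>2 \<le> d"
  proof (rule LIMSEQ_le)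
    show "(\<lambda>n. (norm (x - ms n))\<^sup>2) \<longlonglongrightarrow> (norm (x - p))\<^sup>2" by (intro tendsto_intros p)
    show "(\<lambda>n. d + inverse (real (Suc n))) \<longlonglongrightarrow> d"
      using tendsto_add[OF tendsto_const LIMSEQ_inverse_real_of_nat, of d] by simp
    show "\<exists>N. \<forall>n\<ge>N. (norm (x - ms n))\<^sup>2 \<le> d + inverse (real (Suc n))"
      by (intro exI[of _ 0] allI impI less_imp_le ms(2))
  qed
  have "norm (x - p) \<le> norm (x - m)" if "m \<in> M" for m
  proof (rule power2_le_imp_le)
    show "(norm (x - p))\<^sup>2 \<le> (norm (x - m))\<^sup>2" using p_min d_le[OF that] by linarith
  qed simp
  moreover have "p \<in> M" by (rule closed_sequentially[OF \<open>closed M\<close> ms(1) p])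
  ultimately show ?thesis using that by blast
qed

lemma nearest_point_orthogonal:
  assumes M: "csubspace M" and "p \<in> M" "m \<in> M"
    and nearest: "\<And>m. m \<in> M \<Longrightarrow> norm (x - p) \<le> norm (x - m)"
  shows "ip (x - p) m = 0"
proof -
  have Re0: "Re (ip (x - p) m) = 0" if "m \<in> M" for m
  proof (rule quadratic_nonneg_imp_linear_coeff_zero[where s = "(norm m)\<^sup>2"])
    fix t :: real
    have "p + t *\<^sub>R m \<in> M" using \<open>p \<in> M\<close> that by (simp add: M csubspace_add csubspace_scaleR)
    then have "norm (x - p) \<le> norm ((x - p) - t *\<^sub>R m)"
      using nearest by (simp add: algebra_simps)
    then have "(norm (x - p))\<^sup>2 \<le> (norm ((x - p) - t *\<^sub>R m))\<^sup>2" by (rule power_mono) simp_all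
    also have "\<dots> = (norm (x - p))\<^sup>2 - 2 * t * Re (ip (x - p) m) + t\<^sup>2 * (norm m)\<^sup>2"
      by (simp add: norm_diff_square ip_scaleR_right power_mult_distrib)
    finally show "0 \<le> t\<^sup>2 * (norm m)\<^sup>2 - 2 * t * Re (ip (x - p) m)" by linarith
  qed simp
  have "Im (ip (x - p) m) = Re (ip (x - p) (sm \<i> m))" by (simp add: ip_sm_right)
  also have "\<dots> = 0" using Re0 csubspace_sm[OF M \<open>m \<in> M\<close>] by blast
  finally show ?thesis using Re0[OF \<open>m \<in> M\<close>] by (simp add: complex_eq_iff)
qed

lemma orthogonal_projection_exists:
  assumes "closed M" and "csubspace M"
  obtains p where "p \<in> M" and "\<And>m. m \<in> M \<Longrightarrow> ip (x - p) m = 0"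
proof -
  obtain p where "p \<in> M" and "\<And>m. m \<in> M \<Longrightarrow> norm (x - p) \<le> norm (x - m)"
    using nearest_point_exists[OF assms] by blast
  then show ?thesis using that nearest_point_orthogonal[OF assms(2)] by blast
qed

lemma orthogonal_to_dense_eq_0:
  assumes "closure D = UNIV" and "\<And>u. u \<in> D \<Longrightarrow> ip u w = 0"
  shows "w = 0"
proof -
  have "closed {u. ip u w = 0}" by (intro closed_Collect_eq continuous_intros)
  then have "closure D \<subseteq> {u. ip u w = 0}" using assms(2) by (intro closure_minimal) auto
  then have "ip w w = 0" using assms(1) by auto
  then show ?thesis by (simp add: ip_self_eq_0)
qed

lemma riesz_representation:
  assumes add: "\<And>x y. l (x + y) = l x + l y" and hom: "\<And>a x. l (sm a x) = a * l x"
    and cont: "continuous_on UNIV l"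
  obtains w where "\<And>x. l x = ip x w"
proof (cases "\<forall>x. l x = 0")
  case True
  then show ?thesis using that[of 0] by simp
next
  case False
  then obtain x0 where x0: "l x0 \<noteq> 0" by blast
  have l0: "l 0 = 0" using add[of 0 0] by simp
  have ldiff: "l (x - y) = l x - l y" for x y
    using add[of "x - y" y] by (simp add: eq_diff_eq)
  define N where "N = {x. l x = 0}"
  have "closed N" unfolding N_def by (intro closed_Collect_eq cont continuous_intros)
  moreover have "csubspace N" unfolding N_def csubspace_def by (simp add: l0 add hom)
  ultimately obtain p where "p \<in> N" and p: "\<And>m. m \<in> N \<Longrightarrow> ip (x0 - p) m = 0"
    using orthogonal_projection_exists by blast
  \<comment> \<open>\<open>z\<close> is orthogonal to the kernel, and every \<open>x\<close> is a multiple of \<open>z\<close> modulo the kernel\<close>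
  define z where "z = x0 - p"
  have lz: "l z = l x0" using \<open>p \<in> N\<close> by (simp add: z_def ldiff N_def)
  have "ip z z \<noteq> 0" using lz x0 l0 by (auto simp: ip_self_eq_0)
  have "l x = ip x (sm (cnj (l z / ip z z)) z)" for x
  proof -
    have "x - sm (l x / l z) z \<in> N" using lz x0 by (simp add: N_def ldiff hom)
    then have "ip (x - sm (l x / l z) z) z = 0" using p ip_eq_0_commute unfolding z_def by blast
    then have "ip x z = (l x / l z) * ip z z" by (simp add: ip_diff_left ip_sm_left)
    then show ?thesis using \<open>ip z z \<noteq> 0\<close> lz x0 by (simp add: ip_sm_right field_simps)
  qed
  then show ?thesis by (rule that)
qed

lemma dense_bounded_functional_representation:
  assumes dense: "closure D = UNIV" and D: "csubspace D"
    and add: "\<And>x y. x \<in> D \<Longrightarrow> y \<in> D \<Longrightarrow> l (x + y) = l x + l y"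
    and hom: "\<And>a x. x \<in> D \<Longrightarrow> l (sm a x) = a * l x"
    and "C \<ge> 0" and bound: "\<And>x. x \<in> D \<Longrightarrow> cmod (l x) \<le> C * norm x"
  obtains w where "\<And>x. x \<in> D \<Longrightarrow> l x = ip x w" and "norm w \<le> C"
proof -
  have "C-lipschitz_on D l"
  proof (rule lipschitz_onI)
    fix x y assume "x \<in> D" "y \<in> D"
    then have "x - y \<in> D" by (rule csubspace_diff[OF D])
    then have "l x = l (x - y) + l y" using add \<open>y \<in> D\<close> by (metis diff_add_cancel)
    then have "dist (l x) (l y) = cmod (l (x - y))" by (simp add: dist_norm)
    also have "\<dots> \<le> C * dist x y" using bound[OF \<open>x - y \<in> D\<close>] by (simp add: dist_norm)
    finally show "dist (l x) (l y) \<le> C * dist x y" .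
  qed (rule \<open>C \<ge> 0\<close>)
  then obtain g where "C-lipschitz_on UNIV g" and g: "\<And>x. x \<in> D \<Longrightarrow> g x = l x"
    using lipschitz_extend_closure dense by metis
  then have cont: "continuous_on S f \<Longrightarrow> continuous_on S (\<lambda>x. g (f x))" for S :: "'a set" and f
    using continuous_on_compose2[OF lipschitz_on_continuous_on] by blast
  have extend: "P x" if "closed {x. P x}" and "\<And>x. x \<in> D \<Longrightarrow> P x" for P x
    using closure_minimal[of D "{x. P x}"] that dense by auto
  have closed_sets: "closed {x. g (x + y) = g x + g y}" "closed {y. g (x + y) = g x + g y}"
    "closed {x. g (sm a x) = a * g x}" "closed {x. cmod (g x) \<le> C * norm x}" for x y a
    by (intro closed_Collect_eq closed_Collect_le continuous_intros cont)+
  have "g (x + y) = g x + g y" if "y \<in> D" for x y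
    by (rule extend[of "\<lambda>x. g (x + y) = g x + g y", OF closed_sets(1)])
      (simp add: that g add csubspace_add[OF D])
  then have gadd: "g (x + y) = g x + g y" for x y
    by (rule extend[of "\<lambda>y. g (x + y) = g x + g y", OF closed_sets(2)])
  have ghom: "g (sm a x) = a * g x" for a x
    by (rule extend[of "\<lambda>x. g (sm a x) = a * g x", OF closed_sets(3)])
      (simp add: g hom csubspace_sm[OF D])
  have gbound: "cmod (g x) \<le> C * norm x" for x
    by (rule extend[of "\<lambda>x. cmod (g x) \<le> C * norm x", OF closed_sets(4)])
      (simp add: g bound)
  obtain w where w: "\<And>x. g x = ip x w"
    using riesz_representation[OF gadd ghom cont[OF continuous_on_id]] by blast
  have "(norm w)\<^sup>2 \<le> C * norm w"
  proof -
    have "(norm w)\<^sup>2 = Re (g w)" by (simp add: w Re_ip_self)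
    also have "\<dots> \<le> cmod (g w)" by (rule complex_Re_le_cmod)
    finally show ?thesis using gbound[of w] by linarith
  qed
  then have "norm w \<le> C" using mult_square_le_imp_le[of 1 "norm w" C] \<open>C \<ge> 0\<close> by simp
  then show ?thesis using that g w by metis
qed

lemma adjoint_of_bounded_coercive:
  assumes dense: "closure D = UNIV" and B: "lin_op sm D B" and "c \<ge> 0"
    and bounded: "\<And>\<phi>. \<phi> \<in> D \<Longrightarrow> norm (B \<phi>) \<le> c * norm \<phi>"
    and coercive: "\<And>\<phi>. \<phi> \<in> D \<Longrightarrow> m * (norm \<phi>)\<^sup>2 \<le> Re (ip (B \<phi>) \<phi>)"
  obtains w where "\<And>\<phi>. \<phi> \<in> D \<Longrightarrow> ip (B \<phi>) v = ip \<phi> w"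
    and "norm w \<le> c * norm v" and "m * (norm v)\<^sup>2 \<le> Re (ip w v)"
proof -
  have "ip (B (x + y)) v = ip (B x) v + ip (B y) v" if "x \<in> D" "y \<in> D" for x y
    using that by (simp add: lin_op_add[OF B] ip_add_left)
  moreover have "ip (B (sm a x)) v = a * ip (B x) v" if "x \<in> D" for a x
    using that by (simp add: lin_op_sm[OF B] ip_sm_left)
  moreover have "cmod (ip (B x) v) \<le> c * norm v * norm x" if "x \<in> D" for x
    using cmod_ip_le[of "B x" v] mult_right_mono[OF bounded[OF that], of "norm v"]
    by (simp add: algebra_simps)
  ultimately obtain w where w: "\<And>\<phi>. \<phi> \<in> D \<Longrightarrow> ip (B \<phi>) v = ip \<phi> w" and "norm w \<le> c * norm v"
    using dense_bounded_functional_representation[OF dense lin_op_csubspace[OF B],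
        where l = "\<lambda>\<phi>. ip (B \<phi>) v" and C = "c * norm v"] \<open>c \<ge> 0\<close>
    by (metis zero_le_mult_iff norm_ge_zero)
  \<comment> \<open>coercivity on \<open>D\<close>, perturbed by a term vanishing at \<open>v\<close>, extends to the closure\<close>
  have "m * (norm \<phi>)\<^sup>2 - c * norm \<phi> * norm (v - \<phi>) \<le> Re (ip \<phi> w)" if "\<phi> \<in> D" for \<phi>
  proof -
    have "Re (ip \<phi> w) = Re (ip (B \<phi>) \<phi>) + Re (ip (B \<phi>) (v - \<phi>))"
      using w[OF that] by (simp add: ip_diff_right)
    moreover have "- Re (ip (B \<phi>) (v - \<phi>)) \<le> norm (B \<phi>) * norm (v - \<phi>)"
      using Re_ip_le[of "B \<phi>" "\<phi> - v"] by (simp add: ip_diff_right norm_minus_commute)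
    moreover have "norm (B \<phi>) * norm (v - \<phi>) \<le> c * norm \<phi> * norm (v - \<phi>)"
      using bounded[OF that] by (simp add: mult_right_mono)
    ultimately show ?thesis using coercive[OF that] by linarith
  qed
  then have "m * (norm v)\<^sup>2 - c * norm v * norm (v - v) \<le> Re (ip v w)"
    using continuous_ge_on_closure[where f = "\<lambda>\<phi>. Re (ip \<phi> w) - (m * (norm \<phi>)\<^sup>2 - c * norm \<phi> * norm (v - \<phi>))"
        and a = 0 and S = D and x = v]
    unfolding dense by (force intro: continuous_intros)
  then show ?thesis using that w \<open>norm w \<le> c * norm v\<close> by (simp add: Re_ip_commute)
qed

lemma adj_eqI:
  assumes dense: "closure D = UNIV" and "\<And>u. u \<in> D \<Longrightarrow> ip (A u) v = ip u w"
  shows "v \<in> adj_dom ip D A" and "adj ip D A v = w"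
proof -
  show "v \<in> adj_dom ip D A" using assms(2) unfolding adj_dom_def by blast
  have "w' = w" if "\<forall>u\<in>D. ip (A u) v = ip u w'" for w'
    using orthogonal_to_dense_eq_0[OF dense, of "w' - w"] that assms(2) by (simp add: ip_diff_right)
  then show "adj ip D A v = w" unfolding adj_def using assms(2) by (intro the_equality) auto
qed

lemma adj_adjoint:
  assumes dense: "closure D = UNIV" and "v \<in> adj_dom ip D A" and "u \<in> D"
  shows "ip (A u) v = ip u (adj ip D A v)"
proof -
  obtain w where w: "\<And>u. u \<in> D \<Longrightarrow> ip (A u) v = ip u w"
    using assms(2) unfolding adj_dom_def by blast
  then show ?thesis using adj_eqI(2)[OF dense w] \<open>u \<in> D\<close> by simp
qed

lemma lin_op_adj:
  assumes dense: "closure D = UNIV"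
  shows "lin_op sm (adj_dom ip D A) (adj ip D A)"
proof -
  let ?D = "adj_dom ip D A" and ?A = "adj ip D A"
  have "0 \<in> ?D" using adj_eqI(1)[OF dense, of A 0 0] by simp
  moreover have "v + v' \<in> ?D \<and> ?A (v + v') = ?A v + ?A v'" if "v \<in> ?D" "v' \<in> ?D" for v v'
    using adj_eqI[OF dense, of A "v + v'" "?A v + ?A v'"] adj_adjoint[OF dense] that
    by (simp add: ip_add_right)
  moreover have "sm a v \<in> ?D \<and> ?A (sm a v) = sm a (?A v)" if "v \<in> ?D" for a v
    using adj_eqI[OF dense, of A "sm a v" "sm a (?A v)"] adj_adjoint[OF dense] that
    by (simp add: ip_sm_right)
  ultimately show ?thesis unfolding lin_op_def by blast
qed

lemma adj_extends_formal_adjoint: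
  assumes dense: "closure D = UNIV"
    and formal: "\<And>\<phi> \<psi>. \<phi> \<in> D \<Longrightarrow> \<psi> \<in> D \<Longrightarrow> ip (A \<phi>) \<psi> = ip \<phi> (B \<psi>)" and "\<psi> \<in> D"
  shows "\<psi> \<in> adj_dom ip D B" and "adj ip D B \<psi> = A \<psi>"
proof -
  have "ip (B u) \<psi> = ip u (A \<psi>)" if "u \<in> D" for u
    using formal[OF \<open>\<psi> \<in> D\<close> that] by (metis ip_commute)
  then show "\<psi> \<in> adj_dom ip D B" and "adj ip D B \<psi> = A \<psi>" using adj_eqI[OF dense] by blast+
qed

subsection \<open>The Lax--Milgram lemma on a closed subspace\<close>

lemma lax_milgram_range_closed:
  assumes "closed K" and A: "lin_op sm K A" and "\<mu> > 0"
    and bounded: "\<And>v. v \<in> K \<Longrightarrow> norm (A v) \<le> C * norm v"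
    and coercive: "\<And>v. v \<in> K \<Longrightarrow> \<mu> * (norm v)\<^sup>2 \<le> Re (ip (A v) v)"
  shows "closed {z. \<exists>v\<in>K. \<forall>k\<in>K. ip (z - A v) k = 0}"
proof -
  define S where "S = {(v, z). v \<in> K \<and> (\<forall>k\<in>K. ip (z - A v) k = 0)}"
  have "closed S"
    unfolding closed_sequential_limits
  proof (intro allI impI)
    fix s q assume "(\<forall>n. s n \<in> S) \<and> s \<longlonglongrightarrow> q"
    then have s: "\<And>n. fst (s n) \<in> K" "\<And>n k. k \<in> K \<Longrightarrow> ip (snd (s n) - A (fst (s n))) k = 0"
      and "s \<longlonglongrightarrow> q" unfolding S_def by (auto simp: case_prod_beta)
    then have fst: "(\<lambda>n. fst (s n)) \<longlonglongrightarrow> fst q" and snd: "(\<lambda>n. snd (s n)) \<longlonglongrightarrow> snd q"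
      by (auto intro: tendsto_fst tendsto_snd)
    have "fst q \<in> K" by (rule closed_sequentially[OF \<open>closed K\<close> s(1) fst])
    have "ip (snd q - A (fst q)) k = 0" if "k \<in> K" for k
    proof -
      have "(\<lambda>n. ip (snd (s n) - A (fst (s n))) k) \<longlonglongrightarrow> ip (snd q - A (fst q)) k"
        by (intro tendsto_intros snd lin_op_bounded_tendsto[OF A bounded s(1) \<open>fst q \<in> K\<close> fst])
      then show ?thesis using s(2)[OF that] by (simp add: LIMSEQ_const_iff)
    qed
    then show "q \<in> S" using \<open>fst q \<in> K\<close> unfolding S_def by (auto simp: case_prod_beta)
  qed
  moreover have "\<mu> * norm (v - v') \<le> norm (z - z')" if "(v, z) \<in> S" "(v', z') \<in> S" for v z v' z'
  proof -
    have "v - v' \<in> K" using that csubspace_diff[OF lin_op_csubspace[OF A]] unfolding S_def by blast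
    moreover have "ip (z - A v) (v - v') = 0" "ip (z' - A v') (v - v') = 0"
      using that \<open>v - v' \<in> K\<close> unfolding S_def by blast+
    ultimately have "ip (A (v - v')) (v - v') = ip (z - z') (v - v')"
      using that lin_op_diff[OF A] unfolding S_def by (simp add: ip_diff_left)
    then have "\<mu> * (norm (v - v'))\<^sup>2 \<le> norm (z - z') * norm (v - v')"
      using coercive[OF \<open>v - v' \<in> K\<close>] Re_ip_le[of "z - z'" "v - v'"] by simp
    then show ?thesis by (rule mult_square_le_imp_le) simp_all
  qed
  ultimately have "closed (snd ` S)" by (rule closed_snd_image_if_bounded_below[OF _ \<open>\<mu> > 0\<close>])
  moreover have "snd ` S = {z. \<exists>v\<in>K. \<forall>k\<in>K. ip (z - A v) k = 0}" unfolding S_def by force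
  ultimately show ?thesis by simp
qed

lemma lax_milgram:
  assumes "closed K" and A: "lin_op sm K A" and "\<mu> > 0"
    and bounded: "\<And>v. v \<in> K \<Longrightarrow> norm (A v) \<le> C * norm v"
    and coercive: "\<And>v. v \<in> K \<Longrightarrow> \<mu> * (norm v)\<^sup>2 \<le> Re (ip (A v) v)"
  obtains v where "v \<in> K" and "\<And>k. k \<in> K \<Longrightarrow> ip (y - A v) k = 0"
proof -
  define R where "R = {z. \<exists>v\<in>K. \<forall>k\<in>K. ip (z - A v) k = 0}"
  have K: "csubspace K" by (rule lin_op_csubspace[OF A])
  have "closed R" unfolding R_def by (rule lax_milgram_range_closed[OF assms])
  moreover have "csubspace R"
    unfolding csubspace_def
  proof (intro conjI ballI allI)
    show "0 \<in> R" unfolding R_def using csubspace_0[OF K] lin_op_zero[OF A] by force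
  next
    fix z z' assume "z \<in> R" "z' \<in> R"
    then obtain v v' where "v \<in> K" "v' \<in> K" "\<forall>k\<in>K. ip (z - A v) k = 0" "\<forall>k\<in>K. ip (z' - A v') k = 0"
      unfolding R_def by blast
    then show "z + z' \<in> R" unfolding R_def
      by (intro CollectI bexI[of _ "v + v'"])
        (auto simp: lin_op_add[OF A] csubspace_add[OF K] ip_add_left ip_diff_left)
  next
    fix a z assume "z \<in> R"
    then obtain v where "v \<in> K" "\<forall>k\<in>K. ip (z - A v) k = 0" unfolding R_def by blast
    then show "sm a z \<in> R" unfolding R_def
      by (intro CollectI bexI[of _ "sm a v"])
        (auto simp: lin_op_sm[OF A] csubspace_sm[OF K] sm_diff_right[symmetric] ip_sm_left)
  qed
  ultimately obtain p where "p \<in> R" and p: "\<And>z. z \<in> R \<Longrightarrow> ip (y - p) z = 0"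
    using orthogonal_projection_exists by blast
  \<comment> \<open>\<open>r\<close> is orthogonal to \<open>R\<close>, which contains both \<open>K\<^sup>\<bottom>\<close> and \<open>A K\<close>\<close>
  define r where "r = y - p"
  obtain q where "q \<in> K" and q: "\<And>k. k \<in> K \<Longrightarrow> ip (r - q) k = 0"
    using orthogonal_projection_exists[OF \<open>closed K\<close> K] by blast
  have "r - q \<in> R" unfolding R_def using q csubspace_0[OF K] lin_op_zero[OF A] by force
  then have "ip r (r - q) = 0" using p unfolding r_def by blast
  moreover have "ip q (r - q) = 0" using q[OF \<open>q \<in> K\<close>] ip_eq_0_commute by blast
  ultimately have "ip (r - q) (r - q) = 0" by (simp add: ip_diff_left)
  then have "r = q" by (simp add: ip_self_eq_0)
  then have "r \<in> K" using \<open>q \<in> K\<close> by simp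
  then have "A r \<in> R" unfolding R_def by force
  then have "ip (A r) r = 0" using p ip_eq_0_commute unfolding r_def by blast
  then have "r = 0" using coercive[OF \<open>r \<in> K\<close>] \<open>\<mu> > 0\<close> by (simp add: mult_le_0_iff)
  then show ?thesis using \<open>p \<in> R\<close> that unfolding r_def R_def by auto
qed

end

section \<open>Joint pairs of closed abstract Friedrichs operators\<close>

locale closed_friedrichs = complex_hilbert_space +
  fixes W0 :: "'a set" and T0 Tt0 :: "'a \<Rightarrow> 'a"
  assumes closed_friedrichs_pair: "closed_friedrichs_pair sm ip W0 T0 Tt0"
begin

abbreviation "W \<equiv> adj_dom ip W0 Tt0"
abbreviation "T1 \<equiv> adj ip W0 Tt0"
abbreviation "Wt \<equiv> adj_dom ip W0 T0"
abbreviation "Tt1 \<equiv> adj ip W0 T0"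
abbreviation "ker_Tt1 \<equiv> {v \<in> Wt. Tt1 v = 0}"

lemma lin_op_T0: "lin_op sm W0 T0"
  and lin_op_Tt0: "lin_op sm W0 Tt0"
  and dense_W0: "closure W0 = UNIV"
  and T0_Tt0_formal_adjoint: "\<And>\<phi> \<psi>. \<phi> \<in> W0 \<Longrightarrow> \<psi> \<in> W0 \<Longrightarrow> ip (T0 \<phi>) \<psi> = ip \<phi> (Tt0 \<psi>)"
  and closed_graph_T0: "closed {(\<phi>, T0 \<phi>) | \<phi>. \<phi> \<in> W0}"
  using closed_friedrichs_pair
  unfolding closed_friedrichs_pair_def friedrichs_pair_def densely_defined_def closed_op_def
  by blast+

lemma T0_plus_Tt0_bounded:
  obtains c where "c > 0" and "\<And>\<phi>. \<phi> \<in> W0 \<Longrightarrow> norm (T0 \<phi> + Tt0 \<phi>) \<le> c * norm \<phi>"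
  using closed_friedrichs_pair unfolding closed_friedrichs_pair_def friedrichs_pair_def by blast

lemma T0_plus_Tt0_coercive:
  obtains \<mu>0 where "\<mu>0 > 0" and "\<And>\<phi>. \<phi> \<in> W0 \<Longrightarrow> 2 * \<mu>0 * (norm \<phi>)\<^sup>2 \<le> Re (ip (T0 \<phi> + Tt0 \<phi>) \<phi>)"
  using closed_friedrichs_pair unfolding closed_friedrichs_pair_def friedrichs_pair_def by blast

lemma csubspace_W0: "csubspace W0"
  by (rule lin_op_csubspace[OF lin_op_T0])

lemma lin_op_T1: "lin_op sm W T1"
  by (rule lin_op_adj[OF dense_W0])

lemma T1_extends_T0: "\<phi> \<in> W0 \<Longrightarrow> \<phi> \<in> W" "\<phi> \<in> W0 \<Longrightarrow> T1 \<phi> = T0 \<phi>"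
  by (rule adj_extends_formal_adjoint[OF dense_W0 T0_Tt0_formal_adjoint], assumption+)+

lemma T0_bounded_below:
  obtains \<mu> where "\<mu> > 0" and "\<And>\<phi>. \<phi> \<in> W0 \<Longrightarrow> \<mu> * norm \<phi> \<le> norm (T0 \<phi>)"
proof -
  obtain \<mu>0 where "\<mu>0 > 0"
    and coercive: "\<And>\<phi>. \<phi> \<in> W0 \<Longrightarrow> 2 * \<mu>0 * (norm \<phi>)\<^sup>2 \<le> Re (ip (T0 \<phi> + Tt0 \<phi>) \<phi>)"
    using T0_plus_Tt0_coercive by blast
  have "\<mu>0 * norm \<phi> \<le> norm (T0 \<phi>)" if "\<phi> \<in> W0" for \<phi>
  proof (rule mult_square_le_imp_le)
    have "Re (ip (Tt0 \<phi>) \<phi>) = Re (ip (T0 \<phi>) \<phi>)"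
      using T0_Tt0_formal_adjoint[OF that that] by (simp add: Re_ip_commute)
    then have "\<mu>0 * (norm \<phi>)\<^sup>2 \<le> Re (ip (T0 \<phi>) \<phi>)" using coercive[OF that] by (simp add: ip_add_left)
    also have "\<dots> \<le> norm (T0 \<phi>) * norm \<phi>" by (rule Re_ip_le)
    finally show "\<mu>0 * (norm \<phi>)\<^sup>2 \<le> norm (T0 \<phi>) * norm \<phi>" .
  qed simp_all
  then show ?thesis using that \<open>\<mu>0 > 0\<close> by blast
qed

lemma closed_range_T0: "closed (T0 ` W0)"
proof -
  obtain \<mu> where "\<mu> > 0" and below: "\<And>\<phi>. \<phi> \<in> W0 \<Longrightarrow> \<mu> * norm \<phi> \<le> norm (T0 \<phi>)"
    using T0_bounded_below by blast
  have "closed (snd ` {(\<phi>, T0 \<phi>) | \<phi>. \<phi> \<in> W0})"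
  proof (rule closed_snd_image_if_bounded_below[OF closed_graph_T0 \<open>\<mu> > 0\<close>])
    fix x y x' y' assume "(x, y) \<in> {(\<phi>, T0 \<phi>) | \<phi>. \<phi> \<in> W0}" "(x', y') \<in> {(\<phi>, T0 \<phi>) | \<phi>. \<phi> \<in> W0}"
    then have "x \<in> W0" "x' \<in> W0" "y - y' = T0 (x - x')" by (auto simp: lin_op_diff[OF lin_op_T0])
    then show "\<mu> * norm (x - x') \<le> norm (y - y')" using below csubspace_diff[OF csubspace_W0] by simp
  qed
  moreover have "snd ` {(\<phi>, T0 \<phi>) | \<phi>. \<phi> \<in> W0} = T0 ` W0" by force
  ultimately show ?thesis by simp
qed

lemma ker_Tt1_iff: "v \<in> ker_Tt1 \<longleftrightarrow> (\<forall>\<phi>\<in>W0. ip (T0 \<phi>) v = 0)"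
  using adj_adjoint[OF dense_W0, of v T0] adj_eqI[OF dense_W0, of T0 v 0] by auto

lemma csubspace_ker_Tt1: "csubspace ker_Tt1"
  by (rule csubspace_kernel[OF lin_op_adj[OF dense_W0]])

lemma closed_ker_Tt1: "closed ker_Tt1"
proof -
  have "ker_Tt1 = (\<Inter>\<phi>\<in>W0. {v. ip (T0 \<phi>) v = 0})" using ker_Tt1_iff by blast
  moreover have "closed {v. ip (T0 \<phi>) v = 0}" for \<phi> by (intro closed_Collect_eq continuous_intros)
  ultimately show ?thesis by (simp add: closed_INT)
qed

lemma orthogonal_to_ker_Tt1_imp_range_T0:
  assumes "\<And>k. k \<in> ker_Tt1 \<Longrightarrow> ip y k = 0"
  obtains u0 where "u0 \<in> W0" and "y = T0 u0"
proof -
  obtain a where "a \<in> W0" and a: "\<And>m. m \<in> T0 ` W0 \<Longrightarrow> ip (y - T0 a) m = 0"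
    using orthogonal_projection_exists[OF closed_range_T0 csubspace_image[OF lin_op_T0]] by blast
  then have "y - T0 a \<in> ker_Tt1" using ip_eq_0_commute unfolding ker_Tt1_iff by blast
  then have "ip y (y - T0 a) = 0" "ip (T0 a) (y - T0 a) = 0"
    using assms \<open>a \<in> W0\<close> ker_Tt1_iff by blast+
  then have "ip (y - T0 a) (y - T0 a) = 0" by (simp add: ip_diff_left)
  then show ?thesis using that \<open>a \<in> W0\<close> by (simp add: ip_self_eq_0)
qed

lemma ker_Tt1_bounded_coercive:
  assumes "c \<ge> 0" and bounded: "\<And>\<phi>. \<phi> \<in> W0 \<Longrightarrow> norm (T0 \<phi> + Tt0 \<phi>) \<le> c * norm \<phi>"
    and coercive: "\<And>\<phi>. \<phi> \<in> W0 \<Longrightarrow> m * (norm \<phi>)\<^sup>2 \<le> Re (ip (T0 \<phi> + Tt0 \<phi>) \<phi>)"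
    and v: "v \<in> ker_Tt1"
  shows "v \<in> W" and "norm (T1 v) \<le> c * norm v" and "m * (norm v)\<^sup>2 \<le> Re (ip (T1 v) v)"
proof -
  have B: "lin_op sm W0 (\<lambda>\<phi>. T0 \<phi> + Tt0 \<phi>)"
    using lin_op_T0 lin_op_Tt0 unfolding lin_op_def by (simp add: sm_add_right algebra_simps)
  obtain w where w: "\<And>\<phi>. \<phi> \<in> W0 \<Longrightarrow> ip (T0 \<phi> + Tt0 \<phi>) v = ip \<phi> w"
    and "norm w \<le> c * norm v" and "m * (norm v)\<^sup>2 \<le> Re (ip w v)"
    using adjoint_of_bounded_coercive[OF dense_W0 B \<open>c \<ge> 0\<close> bounded coercive] by blast
  have "ip (Tt0 \<phi>) v = ip \<phi> w" if "\<phi> \<in> W0" for \<phi>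
    using w[OF that] v that ker_Tt1_iff by (simp add: ip_add_left)
  then have "v \<in> W" and "T1 v = w" using adj_eqI[OF dense_W0] by blast+
  then show "v \<in> W" and "norm (T1 v) \<le> c * norm v" and "m * (norm v)\<^sup>2 \<le> Re (ip (T1 v) v)"
    using \<open>norm w \<le> c * norm v\<close> \<open>m * (norm v)\<^sup>2 \<le> Re (ip w v)\<close> by simp_all
qed

lemma ker_Tt1_subset_W: "ker_Tt1 \<subseteq> W"
proof -
  obtain c where "c > 0" and bounded: "\<And>\<phi>. \<phi> \<in> W0 \<Longrightarrow> norm (T0 \<phi> + Tt0 \<phi>) \<le> c * norm \<phi>"
    using T0_plus_Tt0_bounded by blast
  obtain \<mu>0 where coercive: "\<And>\<phi>. \<phi> \<in> W0 \<Longrightarrow> 2 * \<mu>0 * (norm \<phi>)\<^sup>2 \<le> Re (ip (T0 \<phi> + Tt0 \<phi>) \<phi>)"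
    using T0_plus_Tt0_coercive by blast
  show ?thesis using ker_Tt1_bounded_coercive(1)[OF less_imp_le[OF \<open>c > 0\<close>] bounded coercive] by blast
qed

lemma lin_op_T1_ker_Tt1: "lin_op sm ker_Tt1 T1"
  by (rule lin_op_restrict[OF lin_op_T1 csubspace_ker_Tt1 ker_Tt1_subset_W])

lemma W_decomposition_exists:
  assumes "u \<in> W"
  obtains u0 \<nu> \<nu>t where "u0 \<in> W0" "\<nu> \<in> W" "T1 \<nu> = 0" "\<nu>t \<in> ker_Tt1" "u = u0 + \<nu> + \<nu>t"
proof -
  obtain c where "c > 0" and bounded: "\<And>\<phi>. \<phi> \<in> W0 \<Longrightarrow> norm (T0 \<phi> + Tt0 \<phi>) \<le> c * norm \<phi>"
    using T0_plus_Tt0_bounded by blast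
  obtain \<mu>0 where "\<mu>0 > 0"
    and coercive: "\<And>\<phi>. \<phi> \<in> W0 \<Longrightarrow> 2 * \<mu>0 * (norm \<phi>)\<^sup>2 \<le> Re (ip (T0 \<phi> + Tt0 \<phi>) \<phi>)"
    using T0_plus_Tt0_coercive by blast
  note T1_ker = ker_Tt1_bounded_coercive[OF less_imp_le[OF \<open>c > 0\<close>] bounded coercive]
  have "2 * \<mu>0 > 0" using \<open>\<mu>0 > 0\<close> by simp
  obtain \<nu>t where "\<nu>t \<in> ker_Tt1" and \<nu>t: "\<And>k. k \<in> ker_Tt1 \<Longrightarrow> ip (T1 u - T1 \<nu>t) k = 0"
    using lax_milgram[OF closed_ker_Tt1 lin_op_T1_ker_Tt1 \<open>2 * \<mu>0 > 0\<close> T1_ker(2,3), of "T1 u"] by blast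
  obtain u0 where "u0 \<in> W0" and u0: "T1 u - T1 \<nu>t = T0 u0"
    using orthogonal_to_ker_Tt1_imp_range_T0[OF \<nu>t] by blast
  define \<nu> where "\<nu> = u - \<nu>t - u0"
  have "u0 \<in> W" "T1 u0 = T0 u0" using T1_extends_T0 \<open>u0 \<in> W0\<close> by blast+
  moreover have "\<nu>t \<in> W" using ker_Tt1_subset_W \<open>\<nu>t \<in> ker_Tt1\<close> by blast
  ultimately have "\<nu> \<in> W" and "T1 \<nu> = 0"
    using \<open>u \<in> W\<close> u0 csubspace_diff[OF lin_op_csubspace[OF lin_op_T1]] lin_op_diff[OF lin_op_T1]
    unfolding \<nu>_def by simp_all
  moreover have "u = u0 + \<nu> + \<nu>t" by (simp add: \<nu>_def)
  ultimately show ?thesis using that \<open>u0 \<in> W0\<close> \<open>\<nu>t \<in> ker_Tt1\<close> by blast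
qed

lemma W_decomposition_of_0:
  assumes "u0 \<in> W0" "\<nu> \<in> W" "T1 \<nu> = 0" "\<nu>t \<in> ker_Tt1" and sum: "u0 + \<nu> + \<nu>t = 0"
  shows "u0 = 0 \<and> \<nu> = 0 \<and> \<nu>t = 0"
proof -
  obtain c where "c > 0" and bounded: "\<And>\<phi>. \<phi> \<in> W0 \<Longrightarrow> norm (T0 \<phi> + Tt0 \<phi>) \<le> c * norm \<phi>"
    using T0_plus_Tt0_bounded by blast
  obtain \<mu>0 where "\<mu>0 > 0"
    and coercive: "\<And>\<phi>. \<phi> \<in> W0 \<Longrightarrow> 2 * \<mu>0 * (norm \<phi>)\<^sup>2 \<le> Re (ip (T0 \<phi> + Tt0 \<phi>) \<phi>)"
    using T0_plus_Tt0_coercive by blast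
  obtain \<mu>' where "\<mu>' > 0" and below: "\<And>\<phi>. \<phi> \<in> W0 \<Longrightarrow> \<mu>' * norm \<phi> \<le> norm (T0 \<phi>)"
    using T0_bounded_below by blast
  have W: "u0 \<in> W" "\<nu>t \<in> W" using assms(1,4) T1_extends_T0 ker_Tt1_subset_W by blast+
  have "T1 (u0 + \<nu> + \<nu>t) = T0 u0 + T1 \<nu>t"
    using assms(1-3) W csubspace_add[OF lin_op_csubspace[OF lin_op_T1]]
    by (simp add: lin_op_add[OF lin_op_T1] T1_extends_T0)
  then have T1_\<nu>t: "T1 \<nu>t = - T0 u0"
    using sum lin_op_zero[OF lin_op_T1] by (simp add: eq_neg_iff_add_eq_0 add.commute)
  then have "ip (T1 \<nu>t) \<nu>t = 0" using ker_Tt1_iff assms(1,4) by (simp add: ip_minus_left)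
  then have "\<nu>t = 0"
    using ker_Tt1_bounded_coercive(3)[OF less_imp_le[OF \<open>c > 0\<close>] bounded coercive \<open>\<nu>t \<in> ker_Tt1\<close>] \<open>\<mu>0 > 0\<close>
    by (simp add: mult_le_0_iff)
  then have "T0 u0 = 0" using T1_\<nu>t lin_op_zero[OF lin_op_T1] by simp
  then have "u0 = 0" using below[OF assms(1)] \<open>\<mu>' > 0\<close> by (simp add: mult_le_0_iff)
  then show ?thesis using sum \<open>\<nu>t = 0\<close> by simp
qed

lemma W_decomposition_unique:
  assumes "u0 \<in> W0" "\<nu> \<in> W" "T1 \<nu> = 0" "\<nu>t \<in> ker_Tt1"
    and "u0' \<in> W0" "\<nu>' \<in> W" "T1 \<nu>' = 0" "\<nu>t' \<in> ker_Tt1"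
    and "u0 + \<nu> + \<nu>t = u0' + \<nu>' + \<nu>t'"
  shows "u0 = u0' \<and> \<nu> = \<nu>' \<and> \<nu>t = \<nu>t'"
proof -
  have "u0 - u0' \<in> W0" using assms by (simp add: csubspace_diff[OF csubspace_W0])
  moreover have "\<nu> - \<nu>' \<in> W" "T1 (\<nu> - \<nu>') = 0"
    using assms csubspace_diff[OF lin_op_csubspace[OF lin_op_T1]] lin_op_diff[OF lin_op_T1] by simp_all
  moreover have "\<nu>t - \<nu>t' \<in> ker_Tt1" using assms csubspace_diff[OF csubspace_ker_Tt1] by blast
  moreover have "(u0 - u0') + (\<nu> - \<nu>') + (\<nu>t - \<nu>t') = 0" using assms(9) by (simp add: algebra_simps)
  ultimately have "u0 - u0' = 0 \<and> \<nu> - \<nu>' = 0 \<and> \<nu>t - \<nu>t' = 0" by (rule W_decomposition_of_0)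
  then show ?thesis by simp
qed

lemma W_iff_decomposition:
  "u \<in> W \<longleftrightarrow> (\<exists>u0 \<nu> \<nu>t. u0 \<in> W0 \<and> \<nu> \<in> W \<and> T1 \<nu> = 0 \<and> \<nu>t \<in> Wt \<and> Tt1 \<nu>t = 0 \<and> u = u0 + \<nu> + \<nu>t)"
proof
  assume "u \<in> W"
  then obtain u0 \<nu> \<nu>t where "u0 \<in> W0" "\<nu> \<in> W" "T1 \<nu> = 0" "\<nu>t \<in> ker_Tt1" "u = u0 + \<nu> + \<nu>t"
    using W_decomposition_exists by blast
  then show "\<exists>u0 \<nu> \<nu>t. u0 \<in> W0 \<and> \<nu> \<in> W \<and> T1 \<nu> = 0 \<and> \<nu>t \<in> Wt \<and> Tt1 \<nu>t = 0 \<and> u = u0 + \<nu> + \<nu>t"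
    by blast
next
  assume "\<exists>u0 \<nu> \<nu>t. u0 \<in> W0 \<and> \<nu> \<in> W \<and> T1 \<nu> = 0 \<and> \<nu>t \<in> Wt \<and> Tt1 \<nu>t = 0 \<and> u = u0 + \<nu> + \<nu>t"
  then obtain u0 \<nu> \<nu>t where "u0 \<in> W0" "\<nu> \<in> W" "\<nu>t \<in> ker_Tt1" "u = u0 + \<nu> + \<nu>t" by blast
  moreover from this have "u0 \<in> W" "\<nu>t \<in> W" using T1_extends_T0(1) ker_Tt1_subset_W by blast+
  ultimately show "u \<in> W" using csubspace_add[OF lin_op_csubspace[OF lin_op_T1]] by simp
qed

end

theorem theorem3p1:
  fixes sm :: "complex \<Rightarrow> 'a::banach \<Rightarrow> 'a"
    and ip :: "'a \<Rightarrow> 'a \<Rightarrow> complex"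
    and W0 :: "'a set" and T0 Tt0 :: "'a \<Rightarrow> 'a"
  assumes H: "complex_hilbert sm ip"
    and F: "closed_friedrichs_pair sm ip W0 T0 Tt0"
  defines "W \<equiv> adj_dom ip W0 Tt0"
    and "T1 \<equiv> adj ip W0 Tt0"
    and "Wt \<equiv> adj_dom ip W0 T0"
    and "Tt1 \<equiv> adj ip W0 T0"
  shows "(\<forall>u. u \<in> W \<longleftrightarrow>
            (\<exists>u0 \<nu> \<nu>t. u0 \<in> W0 \<and> \<nu> \<in> W \<and> T1 \<nu> = 0 \<and> \<nu>t \<in> Wt \<and> Tt1 \<nu>t = 0
                    \<and> u = u0 + \<nu> + \<nu>t))
       \<and> (\<forall>u\<in>W. \<exists>!(u0, \<nu>, \<nu>t). u0 \<in> W0 \<and> \<nu> \<in> W \<and> T1 \<nu> = 0 \<and> \<nu>t \<in> Wt \<and> Tt1 \<nu>t = 0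
                    \<and> u = u0 + \<nu> + \<nu>t)"
proof -
  interpret closed_friedrichs sm ip W0 T0 Tt0
    by unfold_locales (fact H, fact F)
  have "\<exists>!(u0, \<nu>, \<nu>t). u0 \<in> W0 \<and> \<nu> \<in> W \<and> T1 \<nu> = 0 \<and> \<nu>t \<in> Wt \<and> Tt1 \<nu>t = 0 \<and> u = u0 + \<nu> + \<nu>t"
    if "u \<in> W" for u
  proof -
    obtain u0 \<nu> \<nu>t where "u0 \<in> W0" "\<nu> \<in> W" "T1 \<nu> = 0" "\<nu>t \<in> Wt" "Tt1 \<nu>t = 0" "u = u0 + \<nu> + \<nu>t"
      using W_iff_decomposition \<open>u \<in> W\<close> unfolding W_def T1_def Wt_def Tt1_def by blast
    then show ?thesis
      unfolding W_def T1_def Wt_def Tt1_def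
      by (intro ex1I[of _ "(u0, \<nu>, \<nu>t)"]) (auto dest: W_decomposition_unique)
  qed
  then show ?thesis using W_iff_decomposition unfolding W_def T1_def Wt_def Tt1_def by blast
qed

end
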